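(* Let $D$ be an integral domain with quotient field $K$, let $L/K$ be an algebraic field extension, and let $A$ be any subring of $L$ containing $D$. Then for any $\mathrm{reg}(A)$-factroid $F$ of any $A$-submodule $M$ of $L$ such that $D\subseteq F$, one has $A \subseteq F$. In particular, $A$ is the only factroid of $A$ containing $D$.
   Context: $\mathrm{reg}(A)=A\setminus\{0\}$ for the domain $A$. For $T\subseteq A$ and an $A$-module $M$, a $T$-factroid of $M$ is an additive subgroup $F$ of $M$ such that for all $x\in M$ and $t\in T$, $tx\in F$ implies $x\in F$. A factroid of $A$ is a $\mathrm{reg}(A)$-factroid of the $A$-module $A$. *)

theory Defs
  imports "HOL-Computational_Algebra.Polynomial"
begin

text \<open>The field L is modelled as the whole of a type of class field; all rings
and modules below are subsets of L with the operations of L.\<close>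

definition add_subgroup :: "'a::field set \<Rightarrow> bool" where
  "add_subgroup F \<longleftrightarrow> 0 \<in> F \<and> (\<forall>x\<in>F. \<forall>y\<in>F. x + y \<in> F) \<and> (\<forall>x\<in>F. - x \<in> F)"

definition subring :: "'a::field set \<Rightarrow> bool" where
  "subring S \<longleftrightarrow> add_subgroup S \<and> 1 \<in> S \<and> (\<forall>x\<in>S. \<forall>y\<in>S. x * y \<in> S)"

definition submodule :: "'a::field set \<Rightarrow> 'a set \<Rightarrow> bool" where
  "submodule A M \<longleftrightarrow> add_subgroup M \<and> (\<forall>a\<in>A. \<forall>x\<in>M. a * x \<in> M)"

definition reg :: "'a::field set \<Rightarrow> 'a set" where
  "reg A = A - {0}"

definition factroid_of :: "'a::field set \<Rightarrow> 'a set \<Rightarrow> 'a set \<Rightarrow> bool" where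
  "factroid_of T M F \<longleftrightarrow> add_subgroup F \<and> F \<subseteq> M \<and>
     (\<forall>x\<in>M. \<forall>t\<in>T. t * x \<in> F \<longrightarrow> x \<in> F)"

definition quotient_field :: "'a::field set \<Rightarrow> 'a set" where
  "quotient_field D = {a / b | a b. a \<in> D \<and> b \<in> D \<and> b \<noteq> 0}"

definition algebraic_over :: "'a::field set \<Rightarrow> 'a \<Rightarrow> bool" where
  "algebraic_over K x \<longleftrightarrow> (\<exists>p. p \<noteq> 0 \<and> (\<forall>i. coeff p i \<in> K) \<and> poly p x = 0)"

end

theory Submission
  imports Defs
begin

text \<open>Clearing denominators, every nonzero a \<in> A is a root of a nonzero polynomial p with
  coefficients in D \<subseteq> F. Write p = c + X q. Since c lies in F, the relation p(a) = 0 puts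
  a q(a) into F; as q(a) lies in A, cancelling the regular element a leaves q(a) in F.
  Repeating this peels off one coefficient at a time until a times the leading coefficient
  of p lies in F, and cancelling that nonzero element of D gives a \<in> F.\<close>

lemma add_subgroup_diff:
  assumes "add_subgroup F" "x \<in> F" "y \<in> F"
  shows "x - y \<in> F"
  using assms unfolding add_subgroup_def by (metis diff_conv_add_uminus)

lemma factroid_of_cancel:
  assumes "factroid_of T M F" "x \<in> M" "t \<in> T" "t * x \<in> F"
  shows "x \<in> F"
  using assms unfolding factroid_of_def by blast

lemma submodule_contains_ring:
  assumes "submodule A M" "1 \<in> M"
  shows "A \<subseteq> M"
  using assms unfolding submodule_def by (metis mult.right_neutral subsetI)

lemma subring_poly_closed:
  assumes "subring A" "a \<in> A" "\<forall>i. coeff p i \<in> A"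
  shows "poly p a \<in> A"
  using assms(3)
proof (induction p)
  case (pCons c q)
  then have "c \<in> A" "poly q a \<in> A"
    by (metis coeff_pCons_0, metis coeff_pCons_Suc)
  then show ?case
    using assms(1,2) by (simp add: subring_def add_subgroup_def)
qed (use assms(1) in \<open>simp add: subring_def add_subgroup_def\<close>)

lemma quotient_field_clear_denominators:
  assumes D: "subring D" and p: "\<forall>i. coeff p i \<in> quotient_field D"
  shows "\<exists>d\<in>D. d \<noteq> 0 \<and> (\<forall>i. d * coeff p i \<in> D)"
  using p
proof (induction p)
  case 0
  show ?case
    using D by (intro bexI[of _ 1]) (auto simp: subring_def add_subgroup_def)
next
  case (pCons c q)
  have mult_D: "x * y \<in> D" if "x \<in> D" "y \<in> D" for x y
    using D that by (simp add: subring_def)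
  have "\<forall>i. coeff q i \<in> quotient_field D"
    using pCons.prems by (metis coeff_pCons_Suc)
  then obtain e where e: "e \<in> D" "e \<noteq> 0" "\<forall>i. e * coeff q i \<in> D"
    using pCons.IH by blast
  have "c \<in> quotient_field D"
    using pCons.prems by (metis coeff_pCons_0)
  then obtain u v where uv: "u \<in> D" "v \<in> D" "v \<noteq> 0" "c = u / v"
    unfolding quotient_field_def by blast
  have "(v * e) * coeff (pCons c q) i \<in> D" for i
  proof (cases i)
    case 0
    then have "(v * e) * coeff (pCons c q) i = e * u"
      using uv(3,4) by simp
    then show ?thesis using mult_D[OF e(1) uv(1)] by (simp only:)
  next
    case (Suc j)
    then show ?thesis using uv e mult_D[of v "e * coeff q j"] by (simp add: ac_simps)
  qed
  then show ?case
    using uv e mult_D by (intro bexI[of _ "v * e"]) auto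
qed

lemma algebraic_over_quotient_field:
  assumes "subring D" "algebraic_over (quotient_field D) x"
  shows "\<exists>p. p \<noteq> 0 \<and> (\<forall>i. coeff p i \<in> D) \<and> poly p x = 0"
proof -
  obtain p where p: "p \<noteq> 0" "\<forall>i. coeff p i \<in> quotient_field D" "poly p x = 0"
    using assms(2) unfolding algebraic_over_def by blast
  obtain d where "d \<in> D" "d \<noteq> 0" "\<forall>i. d * coeff p i \<in> D"
    using quotient_field_clear_denominators[OF assms(1) p(2)] by blast
  then show ?thesis
    using p by (intro exI[of _ "smult d p"]) auto
qed

lemma factroid_poly_imp_mult_lead_coeff:
  assumes F: "factroid_of (reg A) M F" and A: "subring A" "A \<subseteq> M"
    and a: "a \<in> reg A" and "\<forall>i. coeff p i \<in> A \<inter> F"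
    and "poly p a \<in> F" "0 < degree p"
  shows "a * lead_coeff p \<in> F"
  using assms(5-)
proof (induction p)
  case (pCons c q)
  have q_nz: "q \<noteq> 0"
    using pCons.prems(3) by auto
  have c: "c \<in> F" and q_coeffs: "\<forall>i. coeff q i \<in> A \<inter> F"
    using pCons.prems(1) by (metis coeff_pCons_0 IntD2, metis coeff_pCons_Suc)
  have "a * poly q a \<in> F"
    using add_subgroup_diff[of F "poly (pCons c q) a" c] pCons.prems(2) c F
    by (simp add: factroid_of_def)
  show ?case
  proof (cases "degree q = 0")
    case True
    have "poly q a = lead_coeff q"
      by (subst degree_0_id[OF True, symmetric]) (simp add: True)
    then show ?thesis
      using \<open>a * poly q a \<in> F\<close> q_nz by simp
  next
    case False
    have "poly q a \<in> A"
      using subring_poly_closed[OF A(1)] a q_coeffs by (simp add: reg_def)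
    then have "poly q a \<in> F"
      using factroid_of_cancel[OF F _ a \<open>a * poly q a \<in> F\<close>] A(2) by blast
    then have "a * lead_coeff q \<in> F"
      using pCons.IH[OF q_coeffs] False by simp
    then show ?thesis
      using q_nz by simp
  qed
qed simp

lemma factroid_contains_root:
  assumes F: "factroid_of (reg A) M F" and A: "subring A" "A \<subseteq> M"
    and a: "a \<in> A" and p: "p \<noteq> 0" "\<forall>i. coeff p i \<in> A \<inter> F" "poly p a = 0"
  shows "a \<in> F"
proof (cases "a = 0")
  case True
  then show ?thesis using F by (simp add: factroid_of_def add_subgroup_def)
next
  case False
  then have a_reg: "a \<in> reg A" using a by (simp add: reg_def)
  have "0 < degree p"
  proof (rule ccontr)
    assume "\<not> 0 < degree p"
    then have const: "p = [:coeff p 0:]"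
      using degree_0_id[of p] by simp
    have "coeff p 0 = 0"
      using p(3) by (subst (asm) const) simp
    then show False
      using p(1) const by (metis pCons_0_0)
  qed
  moreover have "0 \<in> F" using F by (simp add: factroid_of_def add_subgroup_def)
  ultimately have "lead_coeff p * a \<in> F"
    using factroid_poly_imp_mult_lead_coeff[OF F A a_reg p(2)] p(3) by (simp add: mult.commute)
  moreover have "lead_coeff p \<in> reg A"
    using p(1,2) by (simp add: reg_def)
  ultimately show ?thesis
    using factroid_of_cancel[OF F] a A(2) by blast
qed

theorem proposition4p13:
  fixes D A :: "'a::field set"
  assumes D_ring: "subring D"
    and L_alg: "\<forall>x::'a. algebraic_over (quotient_field D) x"
    and A_ring: "subring A"
    and DA: "D \<subseteq> A"
  shows "(\<forall>M F. submodule A M \<and> factroid_of (reg A) M F \<and> D \<subseteq> F \<longrightarrow> A \<subseteq> F)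
       \<and> factroid_of (reg A) A A
       \<and> (\<forall>F. factroid_of (reg A) A F \<and> D \<subseteq> F \<longrightarrow> F = A)"
proof -
  have contains_A: "A \<subseteq> F" if M: "submodule A M" and F: "factroid_of (reg A) M F"
    and DF: "D \<subseteq> F" for M F
  proof
    fix a assume "a \<in> A"
    have "1 \<in> M" using D_ring DF F by (auto simp: subring_def factroid_of_def)
    with M have "A \<subseteq> M" by (rule submodule_contains_ring)
    obtain p where "p \<noteq> 0" "\<forall>i. coeff p i \<in> D" "poly p a = 0"
      using algebraic_over_quotient_field[OF D_ring] L_alg by blast
    then show "a \<in> F"
      using factroid_contains_root[OF F A_ring \<open>A \<subseteq> M\<close> \<open>a \<in> A\<close>] DA DF by blast
  qed
  have "submodule A A" "factroid_of (reg A) A A"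
    using A_ring by (simp_all add: submodule_def factroid_of_def subring_def)
  then show ?thesis
    using contains_A by (auto simp: factroid_of_def)
qed

end
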